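(* Let $n,t'$ be positive integers and $\sigma\in\mathcal{S}_{n+t'}$. Then the symbol $n+t'+1$ can be inserted at some position of $\sigma$ to obtain a permutation $\sigma'\in\mathcal{S}_{n+t'+1}$ such that $\sum_{i=1}^{t'+1}\sigma'^{-1}(n+i)\equiv 0\pmod{n+1}$.
   Context: $\mathcal{S}_N$ is the set of permutations of $[N]=\{1,\ldots,N\}$ written as sequences; $\sigma'^{-1}(k)$ denotes the position of the value $k$ in $\sigma'$. *)

theory Defs
  imports "HOL-Combinatorics.Multiset_Permutations"
begin

text \<open>1-based position of value v in a sequence xs (assumed to occur exactly once),
  i.e. the inverse permutation sigma^{-1}(v).\<close>
definition pos_of :: "nat list \<Rightarrow> nat \<Rightarrow> nat" where
  "pos_of xs v = (THE i. i < length xs \<and> xs ! i = v) + 1"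

definition insert_at :: "nat \<Rightarrow> nat \<Rightarrow> nat list \<Rightarrow> nat list" where
  "insert_at k x xs = take k xs @ [x] @ drop k xs"

end

theory Submission
  imports Defs
begin

text \<open>Let \<open>T k\<close> be the sum of the positions of the symbols \<open>n + 1, \<dots>, n + t' + 1\<close> after
  inserting \<open>n + t' + 1\<close> behind the first \<open>k\<close> entries of \<open>\<sigma>\<close>. Moving the inserted symbol
  one place to the right raises its own position by one and lowers the position of at most
  one other symbol by one, so \<open>T (Suc k) \<le> T k + 1\<close>. Inserting at the front shifts all
  \<open>t'\<close> symbols \<open>n + 1, \<dots>, n + t'\<close>, inserting at the end shifts none, so
  \<open>T (n + t') = T 0 + n\<close>. Hence \<open>T\<close> takes every value of \<open>{T 0..T 0 + n}\<close>, and this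
  interval of \<open>n + 1\<close> consecutive numbers contains a multiple of \<open>n + 1\<close>. The argument
  does not need the hypotheses \<open>n > 0\<close> and \<open>t' > 0\<close>.\<close>

lemma pos_of_nth:
  assumes "distinct xs" "i < length xs"
  shows "pos_of xs (xs ! i) = i + 1"
proof -
  have "(THE j. j < length xs \<and> xs ! j = xs ! i) = i"
    by (rule the_equality) (use assms in \<open>auto simp: nth_eq_iff_index_eq\<close>)
  then show ?thesis by (simp add: pos_of_def)
qed

lemma pos_of_bounds:
  assumes "distinct xs" "v \<in> set xs"
  shows "1 \<le> pos_of xs v" "pos_of xs v \<le> length xs"
  using assms pos_of_nth by (auto simp: in_set_conv_nth)

lemma length_insert_at: "k \<le> length xs \<Longrightarrow> length (insert_at k x xs) = length xs + 1"
  by (simp add: insert_at_def)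

lemma nth_insert_at_less: "i < k \<Longrightarrow> k \<le> length xs \<Longrightarrow> insert_at k x xs ! i = xs ! i"
  by (simp add: insert_at_def nth_append)

lemma nth_insert_at_self: "k \<le> length xs \<Longrightarrow> insert_at k x xs ! k = x"
  by (simp add: insert_at_def nth_append)

lemma nth_insert_at_Suc: "k \<le> i \<Longrightarrow> i < length xs \<Longrightarrow> insert_at k x xs ! Suc i = xs ! i"
  by (simp add: insert_at_def nth_append min_def Suc_diff_le)

lemma set_insert_at: "set (insert_at k x xs) = insert x (set xs)"
proof -
  have "set xs = set (take k xs) \<union> set (drop k xs)"
    by (metis append_take_drop_id set_append)
  then show ?thesis by (auto simp: insert_at_def)
qed

lemma distinct_insert_at: "distinct xs \<Longrightarrow> x \<notin> set xs \<Longrightarrow> distinct (insert_at k x xs)"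
  using distinct_append[of "take k xs" "drop k xs"]
  by (auto simp: insert_at_def dest: in_set_takeD in_set_dropD)

lemma insert_at_permutations_of_set:
  assumes "xs \<in> permutations_of_set A" "x \<notin> A"
  shows "insert_at k x xs \<in> permutations_of_set (insert x A)"
  using assms distinct_insert_at set_insert_at by (auto simp: permutations_of_set_def)

lemma pos_of_insert_at_self:
  assumes "distinct xs" "x \<notin> set xs" "k \<le> length xs"
  shows "pos_of (insert_at k x xs) x = k + 1"
proof -
  have "pos_of (insert_at k x xs) (insert_at k x xs ! k) = k + 1"
    by (rule pos_of_nth) (use assms distinct_insert_at length_insert_at in auto)
  then show ?thesis
    using nth_insert_at_self[OF assms(3)] by simp
qed

lemma pos_of_insert_at:
  assumes "distinct xs" "x \<notin> set xs" "k \<le> length xs" "v \<in> set xs"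
  shows "pos_of (insert_at k x xs) v = (if pos_of xs v \<le> k then pos_of xs v else pos_of xs v + 1)"
proof -
  obtain j where j: "j < length xs" "xs ! j = v"
    using assms(4) by (auto simp: in_set_conv_nth)
  have pos: "pos_of xs v = j + 1"
    using pos_of_nth[OF assms(1) j(1)] j(2) by simp
  have distinct: "distinct (insert_at k x xs)"
    using distinct_insert_at[OF assms(1,2)] .
  have length: "length (insert_at k x xs) = length xs + 1"
    using length_insert_at[OF assms(3)] .
  show ?thesis
  proof (cases "j < k")
    case True
    then have "insert_at k x xs ! j = v"
      using nth_insert_at_less assms(3) j(2) by blast
    then show ?thesis using pos_of_nth[OF distinct, of j] length j(1) pos True by auto
  next
    case False
    then have "insert_at k x xs ! Suc j = v"
      using nth_insert_at_Suc j by simp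
    then show ?thesis using pos_of_nth[OF distinct, of "Suc j"] length j(1) pos False by auto
  qed
qed

lemma sum_pos_of_insert_at:
  assumes "distinct xs" "x \<notin> set xs" "k \<le> length xs" "V \<subseteq> set xs"
  shows "(\<Sum>v\<in>insert x V. pos_of (insert_at k x xs) v)
    = (\<Sum>v\<in>V. if pos_of xs v \<le> k then pos_of xs v else pos_of xs v + 1) + k + 1"
proof -
  have "finite V" "x \<notin> V"
    using assms(2,4) finite_subset by auto
  then have "(\<Sum>v\<in>insert x V. pos_of (insert_at k x xs) v)
      = (\<Sum>v\<in>V. pos_of (insert_at k x xs) v) + (k + 1)"
    using pos_of_insert_at_self[OF assms(1-3)] by simp
  also have "(\<Sum>v\<in>V. pos_of (insert_at k x xs) v)
      = (\<Sum>v\<in>V. if pos_of xs v \<le> k then pos_of xs v else pos_of xs v + 1)"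
    using pos_of_insert_at[OF assms(1-3)] assms(4) by (intro sum.cong) auto
  finally show ?thesis by simp
qed

lemma sum_pos_of_insert_at_Suc_le:
  assumes "distinct xs" "x \<notin> set xs" "Suc k \<le> length xs" "V \<subseteq> set xs"
  shows "(\<Sum>v\<in>insert x V. pos_of (insert_at (Suc k) x xs) v)
    \<le> (\<Sum>v\<in>insert x V. pos_of (insert_at k x xs) v) + 1"
proof -
  have "(\<Sum>v\<in>V. if pos_of xs v \<le> Suc k then pos_of xs v else pos_of xs v + 1)
      \<le> (\<Sum>v\<in>V. if pos_of xs v \<le> k then pos_of xs v else pos_of xs v + 1)"
    by (intro sum_mono) auto
  then show ?thesis
    using sum_pos_of_insert_at[OF assms(1,2) _ assms(4)] assms(3) by simp
qed

lemma sum_pos_of_insert_at_0: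
  assumes "distinct xs" "x \<notin> set xs" "V \<subseteq> set xs"
  shows "(\<Sum>v\<in>insert x V. pos_of (insert_at 0 x xs) v) = (\<Sum>v\<in>V. pos_of xs v) + card V + 1"
proof -
  have "(\<Sum>v\<in>V. if pos_of xs v \<le> 0 then pos_of xs v else pos_of xs v + 1)
      = (\<Sum>v\<in>V. pos_of xs v + 1)"
    using pos_of_bounds(1)[OF assms(1)] assms(3) by (intro sum.cong) fastforce+
  then show ?thesis
    using sum_pos_of_insert_at[OF assms(1,2) _ assms(3)] by (simp add: sum_Suc)
qed

lemma sum_pos_of_insert_at_length:
  assumes "distinct xs" "x \<notin> set xs" "V \<subseteq> set xs"
  shows "(\<Sum>v\<in>insert x V. pos_of (insert_at (length xs) x xs) v)
    = (\<Sum>v\<in>V. pos_of xs v) + length xs + 1"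
proof -
  have "(\<Sum>v\<in>V. if pos_of xs v \<le> length xs then pos_of xs v else pos_of xs v + 1)
      = (\<Sum>v\<in>V. pos_of xs v)"
    using pos_of_bounds(2)[OF assms(1)] assms(3) by (intro sum.cong) auto
  then show ?thesis
    using sum_pos_of_insert_at[OF assms(1,2) _ assms(3)] by simp
qed

lemma nat_intermed_val_Suc_le:
  fixes g :: "nat \<Rightarrow> nat"
  assumes "\<And>k. k < m \<Longrightarrow> g (Suc k) \<le> g k + 1" "g 0 \<le> v" "v \<le> g m"
  shows "\<exists>k\<le>m. g k = v"
  using assms
proof (induction m)
  case 0
  then show ?case by auto
next
  case (Suc m)
  show ?case
  proof (cases "v \<le> g m")
    case True
    then show ?thesis using Suc by (metis le_Suc_eq less_SucI)
  next
    case False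
    then have "g (Suc m) = v" using Suc.prems by fastforce
    then show ?thesis by blast
  qed
qed

lemma ex_dvd_between: "\<exists>v. a \<le> v \<and> v \<le> a + n \<and> Suc n dvd (v :: nat)"
proof (intro exI conjI)
  let ?v = "(a + n) div Suc n * Suc n"
  have "a + n = ?v + (a + n) mod Suc n"
    by (rule div_mult_mod_eq[symmetric])
  moreover have "(a + n) mod Suc n \<le> n"
    using mod_less_divisor[of "Suc n" "a + n"] by simp
  ultimately show "a \<le> ?v" "?v \<le> a + n"
    by linarith+
  show "Suc n dvd ?v"
    by (rule dvd_triv_right)
qed

lemma ex_dvd_value_Suc_le:
  fixes g :: "nat \<Rightarrow> nat"
  assumes "\<And>k. k < m \<Longrightarrow> g (Suc k) \<le> g k + 1" "g m = g 0 + n"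
  shows "\<exists>k\<le>m. Suc n dvd g k"
proof -
  obtain v where "g 0 \<le> v" "v \<le> g 0 + n" "Suc n dvd v"
    using ex_dvd_between by blast
  then show ?thesis
    using nat_intermed_val_Suc_le[of m g v] assms by auto
qed

lemma ex_insert_at_dvd_sum_pos_of:
  assumes "distinct xs" "x \<notin> set xs" "V \<subseteq> set xs" "length xs = card V + n"
  shows "\<exists>k\<le>length xs. Suc n dvd (\<Sum>v\<in>insert x V. pos_of (insert_at k x xs) v)"
proof -
  define T where "T k = (\<Sum>v\<in>insert x V. pos_of (insert_at k x xs) v)" for k
  have "T (length xs) = T 0 + n"
    using sum_pos_of_insert_at_0[OF assms(1-3)] sum_pos_of_insert_at_length[OF assms(1-3)] assms(4)
    by (simp add: T_def)
  moreover have "T (Suc k) \<le> T k + 1" if "k < length xs" for k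
    using sum_pos_of_insert_at_Suc_le[OF assms(1,2) _ assms(3)] that by (simp add: T_def)
  ultimately show ?thesis
    using ex_dvd_value_Suc_le[of "length xs" T n] by (simp add: T_def)
qed

theorem lemma7:
  fixes n t' :: nat and \<sigma> :: "nat list"
  assumes "n > 0" and "t' > 0"
    and "\<sigma> \<in> permutations_of_set {1..n + t'}"
  shows "\<exists>k \<le> n + t'. 
           insert_at k (n + t' + 1) \<sigma> \<in> permutations_of_set {1..n + t' + 1} \<and>
           (\<Sum>i = 1..t' + 1. pos_of (insert_at k (n + t' + 1) \<sigma>) (n + i)) mod (n + 1) = 0"
proof -
  define N where "N = n + t'"
  have \<sigma>: "set \<sigma> = {1..N}" "distinct \<sigma>"
    using assms(3) by (auto simp: permutations_of_set_def N_def)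
  have length: "length \<sigma> = N"
    using distinct_card[OF \<sigma>(2)] \<sigma>(1) by simp
  then have "length \<sigma> = card {n + 1..N} + n"
    by (simp add: N_def)
  moreover have "N + 1 \<notin> set \<sigma>" "{n + 1..N} \<subseteq> set \<sigma>"
    using \<sigma>(1) by auto
  ultimately obtain k where k: "k \<le> N"
      "Suc n dvd (\<Sum>v\<in>insert (N + 1) {n + 1..N}. pos_of (insert_at k (N + 1) \<sigma>) v)"
    using ex_insert_at_dvd_sum_pos_of[OF \<sigma>(2)] length by metis
  have "(\<Sum>i = 1..t' + 1. pos_of (insert_at k (N + 1) \<sigma>) (n + i))
      = (\<Sum>v = 1 + n..t' + 1 + n. pos_of (insert_at k (N + 1) \<sigma>) v)"
    by (simp only: sum.atLeastAtMost_shift_bounds comp_def)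
  also have "{1 + n..t' + 1 + n} = insert (N + 1) {n + 1..N}"
    by (auto simp: N_def)
  finally have "Suc n dvd (\<Sum>i = 1..t' + 1. pos_of (insert_at k (N + 1) \<sigma>) (n + i))"
    using k(2) by simp
  moreover have "insert_at k (N + 1) \<sigma> \<in> permutations_of_set {1..N + 1}"
    using insert_at_permutations_of_set[OF assms(3)[folded N_def], of "N + 1" k]
    by (simp add: atLeastAtMostSuc_conv)
  ultimately show ?thesis
    using k(1) by (auto simp: N_def dvd_eq_mod_eq_0)
qed

end
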